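(* Let $V_k$ be the complex vector space spanned by all $\Gamma^\mu_r$ with $1\le r\le u-1$ and $\mu\in r-1+2\mathbb Z$. Then $V_k$ is spanned by $\{\Gamma^\mu_r:(\mu;r)\in\mathbf B_k\}$, where $\mathbf B_k$ is the set of pairs $(\mu;r)$ of integers with $\mu\equiv r-1\pmod 2$ and: if $u$ is odd, $0\le\mu\le w$ and $1\le r\le\frac{u-1}2$; if $u$ is even, either $0\le\mu\le w$ and $1\le r\le\frac u2-1$, or $0\le\mu\le\frac w2$ and $r=\frac u2$.
   Context: $u,v\in\mathbb Z_{\ge2}$ coprime with $u<2v$; $k=-2+u/v<0$, $w=2v-u$, $\mathbb L=2w\mathbb Z$. $\chi^{u,v}_{r,s}(q)=\eta(q)^{-1}\sum_{n\in\mathbb Z}(q^{(2uvn+vr-us)^2/4uv}-q^{(2uvn+vr+us)^2/4uv})$, $\eta$ Dedekind's eta. For $\mu\in\frac1v\mathbb Z$, $\theta'_{\mu+\mathbb L}(q)=-\frac1{2w}\sum_{\lambda\in\mu+\mathbb L}\lambda q^{-\lambda^2/4k}$. For $1\le r\le u-1$ and $\mu\in r-1+2\mathbb Z$, $$\Gamma^\mu_r(q)=\sum_{s=1}^{v-1}(-1)^{s-1}\frac{\chi^{u,v}_{r,s}(q)}{\eta(q)}\big[\theta'_{\mu+sk+\mathbb L}(q)-\theta'_{\mu-sk+\mathbb L}(q)\big].$$ *)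

theory Defs
  imports "HOL-Analysis.Analysis"
begin

text \<open>All q-series are regarded as functions of tau in the upper half-plane,
  with q = exp(2 pi i tau) and q powr a := exp(2 pi i a tau) for real a.\<close>

definition qp :: "real \<Rightarrow> complex \<Rightarrow> complex" where
  "qp a \<tau> = exp (2 * of_real pi * \<i> * of_real a * \<tau>)"

definition eta :: "complex \<Rightarrow> complex" where
  "eta \<tau> = qp (1/24) \<tau> * (\<Prod>n. (1 - qp (real (Suc n)) \<tau>))"

definition kk :: "nat \<Rightarrow> nat \<Rightarrow> real" where
  "kk u v = -2 + real u / real v"

definition ww :: "nat \<Rightarrow> nat \<Rightarrow> int" where
  "ww u v = 2 * int v - int u"

definition chi :: "nat \<Rightarrow> nat \<Rightarrow> int \<Rightarrow> int \<Rightarrow> complex \<Rightarrow> complex" where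
  "chi u v r s \<tau> =
     (\<Sum>\<^sub>\<infinity>n::int.
        qp ((2*(real u)*(real v)*(of_int n) + (real v)*(of_int r) - (real u)*(of_int s))^2 / (4*(real u)*(real v))) \<tau>
      - qp ((2*(real u)*(real v)*(of_int n) + (real v)*(of_int r) + (real u)*(of_int s))^2 / (4*(real u)*(real v))) \<tau>)
     / eta \<tau>"

definition thetap :: "nat \<Rightarrow> nat \<Rightarrow> real \<Rightarrow> complex \<Rightarrow> complex" where
  "thetap u v \<mu> \<tau> =
     - (1 / (2 * of_int (ww u v))) *
       (\<Sum>\<^sub>\<infinity>n::int. (let l = \<mu> + 2 * of_int (ww u v) * of_int n
                       in of_real l * qp (- (l^2) / (4 * kk u v)) \<tau>))"

definition Gam :: "nat \<Rightarrow> nat \<Rightarrow> int \<Rightarrow> int \<Rightarrow> complex \<Rightarrow> complex" where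
  "Gam u v \<mu> r \<tau> =
     (if Im \<tau> > 0 then
        (\<Sum>s = 1..int v - 1. (-1) ^ nat (s - 1) * (chi u v r s \<tau> / eta \<tau>) *
            (thetap u v (of_int \<mu> + of_int s * kk u v) \<tau>
             - thetap u v (of_int \<mu> - of_int s * kk u v) \<tau>))
      else 0)"

definition cspan :: "('a \<Rightarrow> complex) set \<Rightarrow> ('a \<Rightarrow> complex) set" where
  "cspan S = {f. \<exists>T c. finite T \<and> T \<subseteq> S \<and> f = (\<lambda>x. \<Sum>g\<in>T. c g * g x)}"

definition Bk :: "nat \<Rightarrow> nat \<Rightarrow> (int \<times> int) set" where
  "Bk u v = {(\<mu>, r). \<mu> mod 2 = (r - 1) mod 2 \<and>
     ((odd u \<and> 0 \<le> \<mu> \<and> \<mu> \<le> ww u v \<and> 1 \<le> r \<and> 2 * r \<le> int u - 1)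
    \<or> (even u \<and> ((0 \<le> \<mu> \<and> \<mu> \<le> ww u v \<and> 1 \<le> r \<and> 2 * r \<le> int u - 2)
                 \<or> (0 \<le> \<mu> \<and> 2 * \<mu> \<le> ww u v \<and> 2 * r = int u))))}"

end

theory Submission
  imports Defs
begin

text \<open>Since \<open>\<theta>'\<close> is odd and \<open>\<bbbL>\<close>-periodic, \<open>\<Gamma>\<^sup>\<mu>\<^sub>r\<close> depends on \<open>\<mu>\<close> only modulo \<open>\<bbbL> = 2w\<int>\<close> and up to
  sign, so \<open>\<mu>\<close> can be moved into \<open>[0, w]\<close> without changing parity. The symmetry
  \<open>\<chi>\<^sub>u\<^sub>-\<^sub>r\<^sub>,\<^sub>v\<^sub>-\<^sub>s = \<chi>\<^sub>r\<^sub>,\<^sub>s\<close> of the minimal model characters, together with \<open>v k = -w\<close>, gives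
  \<open>\<Gamma>\<^sup>\<mu>\<^sub>u\<^sub>-\<^sub>r = \<plusminus>\<Gamma>\<^sup>\<mu>\<^sup>-\<^sup>w\<^sub>r\<close>, which moves \<open>r\<close> into \<open>[1, u/2]\<close>. For \<open>r = u/2\<close> this reflection fixes
  \<open>r\<close> and maps \<open>\<mu>\<close> to \<open>w - \<mu>\<close> up to sign, which halves the range of \<open>\<mu>\<close>. So every
  spanning function is a scalar multiple of one indexed by \<open>\<^bold>B\<^sub>k\<close>.\<close>

lemma summable_on_exp_neg_abs_int:
  fixes t :: real
  assumes "t > 0"
  shows "(\<lambda>n::int. exp (- t * \<bar>of_int n\<bar>)) summable_on UNIV"
proof -
  let ?g = "\<lambda>n::int. exp (- t * \<bar>of_int n\<bar>)"
  have "summable (\<lambda>n::nat. exp (- t) ^ n)"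
    using assms by (intro summable_geometric) auto
  then have nat: "(\<lambda>n::nat. exp (- t * real n)) summable_on UNIV"
    by (subst summable_on_UNIV_nonneg_real_iff) (auto simp: exp_of_nat_mult[symmetric] mult.commute)
  have "?g summable_on range int"
    using nat by (subst summable_on_reindex) (auto simp: o_def)
  moreover have "?g summable_on range (\<lambda>n. - int n)"
    using nat by (subst summable_on_reindex) (auto simp: o_def inj_def)
  ultimately have "?g summable_on (range int \<union> range (\<lambda>n. - int n))"
    by (rule summable_on_union)
  moreover have "range int \<union> range (\<lambda>n. - int n) = UNIV"
    by (auto intro: int_cases2)
  ultimately show ?thesis by simp
qed

lemma norm_qp: "norm (qp a \<tau>) = exp (- 2 * pi * a * Im \<tau>)"
  by (simp add: qp_def norm_exp_eq_Re)

lemma summable_on_qp_square: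
  fixes a b D :: real
  assumes "\<bar>a\<bar> \<ge> 1" "D > 0" "Im \<tau> > 0"
  shows "(\<lambda>n::int. qp ((a * of_int n + b)\<^sup>2 / D) \<tau>) summable_on UNIV"
proof -
  define t where "t = 2 * pi * Im \<tau> / D"
  have t: "t > 0" using assms by (simp add: t_def)
  have "(\<lambda>n::int. exp (t * (\<bar>b\<bar> + 1)) * exp (- t * \<bar>of_int n\<bar>)) summable_on UNIV"
    by (intro summable_on_cmult_right summable_on_exp_neg_abs_int t)
  then have "(\<lambda>n::int. norm (qp ((a * of_int n + b)\<^sup>2 / D) \<tau>)) summable_on UNIV"
  proof (rule summable_on_comparison_test)
    fix n :: int
    let ?x = "a * of_int n + b"
    have "0 \<le> (\<bar>?x\<bar> - 1/2)\<^sup>2" by simp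
    then have "?x\<^sup>2 \<ge> \<bar>?x\<bar> - 1" by (simp add: power2_eq_square algebra_simps)
    moreover have "\<bar>?x\<bar> \<ge> \<bar>a\<bar> * \<bar>of_int n\<bar> - \<bar>b\<bar>"
      using abs_triangle_ineq2[of "a * of_int n" "- b"] by (simp add: abs_mult)
    moreover have "\<bar>a\<bar> * \<bar>of_int n\<bar> \<ge> \<bar>of_int n\<bar>"
      using assms(1) mult_right_mono[of 1 "\<bar>a\<bar>" "\<bar>of_int n\<bar>"] by simp
    ultimately have "t * ?x\<^sup>2 \<ge> t * (\<bar>of_int n\<bar> - \<bar>b\<bar> - 1)"
      using t by (intro mult_left_mono) auto
    moreover have "- 2 * pi * (?x\<^sup>2 / D) * Im \<tau> = - t * ?x\<^sup>2" by (simp add: t_def)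
    ultimately show "norm (qp (?x\<^sup>2 / D) \<tau>) \<le> exp (t * (\<bar>b\<bar> + 1)) * exp (- t * \<bar>of_int n\<bar>)"
      by (simp add: norm_qp exp_add[symmetric] algebra_simps)
  qed simp
  then show ?thesis by (rule abs_summable_summable)
qed

lemma infsum_diff:
  fixes f g :: "'a \<Rightarrow> 'b::{topological_ab_group_add, t2_space}"
  assumes "f summable_on A" "g summable_on A"
  shows "infsum (\<lambda>x. f x - g x) A = infsum f A - infsum g A"
  using infsum_add[OF assms(1) summable_on_uminus[THEN iffD2, OF assms(2)]] by (simp add: infsum_uminus)

lemma thetap_add_lattice:
  "thetap u v (x + 2 * of_int (ww u v) * of_int j) \<tau> = thetap u v x \<tau>"
proof -
  define F where "F l = of_real l * qp (- (l\<^sup>2) / (4 * kk u v)) \<tau>" for l :: real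
  have "(\<Sum>\<^sub>\<infinity>n::int. F (x + 2 * of_int (ww u v) * of_int j + 2 * of_int (ww u v) * of_int n))
      = (\<Sum>\<^sub>\<infinity>n::int. F (x + 2 * of_int (ww u v) * of_int (n + j)))"
    by (simp add: algebra_simps)
  also have "\<dots> = (\<Sum>\<^sub>\<infinity>n::int. F (x + 2 * of_int (ww u v) * of_int n))"
    by (rule infsum_reindex_bij_betw[OF bij_plus_right])
  finally show ?thesis unfolding thetap_def F_def Let_def by simp
qed

lemma thetap_uminus: "thetap u v (- x) \<tau> = - thetap u v x \<tau>"
proof -
  define F where "F l = of_real l * qp (- (l\<^sup>2) / (4 * kk u v)) \<tau>" for l :: real
  have "(\<Sum>\<^sub>\<infinity>n::int. F (- x + 2 * of_int (ww u v) * of_int n))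
      = (\<Sum>\<^sub>\<infinity>n::int. - F (x + 2 * of_int (ww u v) * of_int (- n)))"
  proof (rule infsum_cong)
    fix n :: int
    have "F (- l) = - F l" for l by (simp add: F_def)
    moreover have "- x + 2 * of_int (ww u v) * of_int n = - (x + 2 * of_int (ww u v) * of_int (- n))"
      by simp
    ultimately show "F (- x + 2 * of_int (ww u v) * of_int n) = - F (x + 2 * of_int (ww u v) * of_int (- n))"
      by metis
  qed
  also have "\<dots> = - (\<Sum>\<^sub>\<infinity>n::int. F (x + 2 * of_int (ww u v) * of_int (- n)))"
    by (rule infsum_uminus)
  also have "(\<Sum>\<^sub>\<infinity>n::int. F (x + 2 * of_int (ww u v) * of_int (- n)))
      = (\<Sum>\<^sub>\<infinity>n::int. F (x + 2 * of_int (ww u v) * of_int n))"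
    by (rule infsum_reindex_bij_betw[OF bij_uminus])
  finally show ?thesis unfolding thetap_def F_def Let_def by simp
qed

lemma infsum_diff_reflect_int:
  fixes f g :: "int \<Rightarrow> 'a::{topological_ab_group_add, t2_space}"
  assumes "f summable_on UNIV" "g summable_on UNIV"
  shows "(\<Sum>\<^sub>\<infinity>n. f (- n) - g (- n - 1)) = (\<Sum>\<^sub>\<infinity>n. f n - g n)"
proof -
  have g_reflect: "(\<lambda>n. g (- n - 1)) = (\<lambda>n. (\<lambda>m. g (- m)) (n + 1))" by simp
  have "(\<lambda>n. f (- n)) summable_on UNIV" "(\<lambda>n. g (- n - 1)) summable_on UNIV"
    using assms summable_on_reindex_bij_betw[OF bij_uminus, of f]
      summable_on_reindex_bij_betw[OF bij_plus_right, of "\<lambda>m. g (- m)" 1]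
      summable_on_reindex_bij_betw[OF bij_uminus, of g]
    by (simp_all only: g_reflect)
  then have "(\<Sum>\<^sub>\<infinity>n. f (- n) - g (- n - 1)) = (\<Sum>\<^sub>\<infinity>n. f (- n)) - (\<Sum>\<^sub>\<infinity>n. g (- n - 1))"
    by (rule infsum_diff)
  also have "\<dots> = infsum f UNIV - infsum g UNIV"
    unfolding g_reflect infsum_reindex_bij_betw[OF bij_plus_right, of "\<lambda>m. g (- m)" 1]
    by (simp add: infsum_reindex_bij_betw[OF bij_uminus])
  also have "\<dots> = (\<Sum>\<^sub>\<infinity>n. f n - g n)"
    using assms by (rule infsum_diff[symmetric])
  finally show ?thesis .
qed

lemma chi_reflect:
  assumes "u \<ge> 1" "v \<ge> 1" "Im \<tau> > 0"
  shows "chi u v (int u - r) (int v - s) \<tau> = chi u v r s \<tau>"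
proof -
  define U V where "U = real u" and "V = real v"
  define Q where "Q c n = qp ((2*U*V * of_int n + c)\<^sup>2 / (4*U*V)) \<tau>" for c :: real and n :: int
  have chi_Q: "chi u v r' s' \<tau> = (\<Sum>\<^sub>\<infinity>n. Q (V * of_int r' - U * of_int s') n
                                       - Q (V * of_int r' + U * of_int s') n) / eta \<tau>" for r' s'
    unfolding chi_def Q_def U_def V_def by (simp only: add_diff_eq add.assoc)
  have "U * V \<ge> 1 * 1" using assms by (intro mult_mono) (auto simp: U_def V_def)
  then have summable: "Q c summable_on UNIV" for c
    using summable_on_qp_square[of "2*U*V" "4*U*V" \<tau> c] assms(3) by (simp add: Q_def[abs_def])
  have "Q (V * of_int (int u - r) - U * of_int (int v - s)) n = Q (V * of_int r - U * of_int s) (- n)"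
    for n
  proof -
    have "2*U*V * of_int n + (V * of_int (int u - r) - U * of_int (int v - s))
        = - (2*U*V * of_int (- n) + (V * of_int r - U * of_int s))"
      by (simp add: U_def V_def algebra_simps)
    then show ?thesis unfolding Q_def by (metis power2_minus)
  qed
  moreover have "Q (V * of_int (int u - r) + U * of_int (int v - s)) n
      = Q (V * of_int r + U * of_int s) (- n - 1)" for n
  proof -
    have "2*U*V * of_int n + (V * of_int (int u - r) + U * of_int (int v - s))
        = - (2*U*V * of_int (- n - 1) + (V * of_int r + U * of_int s))"
      by (simp add: U_def V_def algebra_simps)
    then show ?thesis unfolding Q_def by (metis power2_minus)
  qed
  ultimately show ?thesis
    unfolding chi_Q by (simp only: infsum_diff_reflect_int[OF summable summable])
qed

lemma Gam_add_lattice: "Gam u v (\<mu> + 2 * ww u v * j) r \<tau> = Gam u v \<mu> r \<tau>"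
proof -
  have plus: "of_int (\<mu> + 2 * ww u v * j) + y = (of_int \<mu> + y) + 2 * of_int (ww u v) * of_int j"
    and minus: "of_int (\<mu> + 2 * ww u v * j) - y = (of_int \<mu> - y) + 2 * of_int (ww u v) * of_int j"
    for y :: real
    by simp_all
  show ?thesis unfolding Gam_def plus minus thetap_add_lattice ..
qed

lemma Gam_uminus: "Gam u v (- \<mu>) r \<tau> = Gam u v \<mu> r \<tau>"
proof -
  have plus: "of_int (- \<mu>) + y = - (of_int \<mu> - y)"
    and minus: "of_int (- \<mu>) - y = - (of_int \<mu> + y)" for y :: real
    by simp_all
  show ?thesis unfolding Gam_def plus minus thetap_uminus by simp
qed

lemma minus_one_power_reflect:
  assumes "1 \<le> t" "t \<le> int v - 1"
  shows "(-1::'a::ring_1) ^ nat (int v - t - 1) = (-1) ^ v * (-1) ^ nat (t - 1)"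
proof -
  obtain k m where k: "k = nat (int v - t - 1)" and m: "m = nat (t - 1)" by simp
  have "k + m + 2 = v" using assms unfolding k m by linarith
  then have "even k \<longleftrightarrow> (even v \<longleftrightarrow> even m)" by presburger
  then show ?thesis unfolding k[symmetric] m[symmetric] by (auto simp: minus_one_power_iff)
qed

lemma Gam_reflect:
  assumes "u \<ge> 1" "v \<ge> 1"
  shows "Gam u v \<mu> (int u - r) \<tau> = (-1) ^ (v + 1) * Gam u v (\<mu> - ww u v) r \<tau>"
proof (cases "Im \<tau> > 0")
  case False then show ?thesis by (simp add: Gam_def)
next
  case True
  define T where "T m s = thetap u v (of_int m + of_int s * kk u v) \<tau>
                          - thetap u v (of_int m - of_int s * kk u v) \<tau>" for m s :: int
  have vk: "real v * kk u v = - of_int (ww u v)"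
    using assms by (simp add: kk_def ww_def field_simps)
  have T_reflect: "T \<mu> (int v - t) = - T (\<mu> - ww u v) t" for t
  proof -
    have plus: "of_int \<mu> + of_int (int v - t) * kk u v = of_int (\<mu> - ww u v) - of_int t * kk u v"
      using vk by (simp add: algebra_simps)
    have minus: "of_int \<mu> - of_int (int v - t) * kk u v
        = (of_int (\<mu> - ww u v) + of_int t * kk u v) + 2 * of_int (ww u v) * of_int (1::int)"
      using vk by (simp add: algebra_simps)
    show ?thesis unfolding T_def plus minus thetap_add_lattice by simp
  qed
  have "Gam u v \<mu> (int u - r) \<tau> =
      (\<Sum>s = 1..int v - 1. (-1) ^ nat (s - 1) * (chi u v (int u - r) s \<tau> / eta \<tau>) * T \<mu> s)"
    using True by (simp add: Gam_def T_def)
  also have "\<dots> = (\<Sum>t = 1..int v - 1.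
      (-1) ^ nat (int v - t - 1) * (chi u v (int u - r) (int v - t) \<tau> / eta \<tau>) * T \<mu> (int v - t))"
    by (rule sum.reindex_bij_witness[of _ "\<lambda>t. int v - t" "\<lambda>s. int v - s"]) auto
  also have "\<dots> = (\<Sum>t = 1..int v - 1.
      (-1) ^ (v + 1) * ((-1) ^ nat (t - 1) * (chi u v r t \<tau> / eta \<tau>) * T (\<mu> - ww u v) t))"
  proof (rule sum.cong[OF refl])
    fix t assume "t \<in> {1..int v - 1}"
    then have "(-1::complex) ^ nat (int v - t - 1) = (-1) ^ v * (-1) ^ nat (t - 1)"
      by (intro minus_one_power_reflect) auto
    then show "(-1) ^ nat (int v - t - 1) * (chi u v (int u - r) (int v - t) \<tau> / eta \<tau>) * T \<mu> (int v - t)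
        = (-1) ^ (v + 1) * ((-1) ^ nat (t - 1) * (chi u v r t \<tau> / eta \<tau>) * T (\<mu> - ww u v) t)"
      by (simp add: T_reflect chi_reflect[OF assms True])
  qed
  also have "\<dots> = (-1) ^ (v + 1) * Gam u v (\<mu> - ww u v) r \<tau>"
    using True by (simp add: Gam_def T_def sum_distrib_left)
  finally show ?thesis .
qed

lemma cspan_subset_if_multiples:
  assumes "\<forall>f\<in>A. \<exists>g\<in>B. \<exists>c. f = (\<lambda>x. c * g x)"
  shows "cspan A \<subseteq> cspan B"
proof
  fix f assume "f \<in> cspan A"
  then obtain T c where T: "finite T" "T \<subseteq> A" and f: "f = (\<lambda>x. \<Sum>g\<in>T. c g * g x)"
    unfolding cspan_def by blast
  from assms obtain \<phi> d where \<phi>: "\<forall>f\<in>A. \<phi> f \<in> B \<and> f = (\<lambda>x. d f * \<phi> f x)"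
    by metis
  define e where "e h = (\<Sum>g\<in>{g\<in>T. \<phi> g = h}. c g * d g)" for h
  have "f x = (\<Sum>h\<in>\<phi> ` T. e h * h x)" for x
  proof -
    have "f x = (\<Sum>g\<in>T. c g * d g * \<phi> g x)"
      unfolding f using T(2) \<phi> by (intro sum.cong refl) (metis mult.assoc subsetD)
    also have "\<dots> = (\<Sum>h\<in>\<phi> ` T. \<Sum>g\<in>{g\<in>T. \<phi> g = h}. c g * d g * \<phi> g x)"
      by (rule sum.image_gen[OF T(1)])
    also have "\<dots> = (\<Sum>h\<in>\<phi> ` T. e h * h x)"
      unfolding e_def sum_distrib_right by (intro sum.cong refl) auto
    finally show ?thesis .
  qed
  moreover have "finite (\<phi> ` T)" "\<phi> ` T \<subseteq> B" using T \<phi> by auto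
  ultimately show "f \<in> cspan B" unfolding cspan_def by blast
qed

lemma Gam_representative_between_0_ww:
  assumes "ww u v > 0"
  obtains \<mu>' where "0 \<le> \<mu>'" "\<mu>' \<le> ww u v" "\<mu>' mod 2 = \<mu> mod 2" "Gam u v \<mu>' r = Gam u v \<mu> r"
proof -
  define w where "w = ww u v"
  define m where "m = \<mu> mod (2 * w)"
  have mu: "\<mu> = m + 2 * w * (\<mu> div (2 * w))" unfolding m_def by simp
  have m: "0 \<le> m" "m < 2 * w" using assms unfolding m_def w_def by auto
  have "Gam u v \<mu> r = Gam u v (m + 2 * w * (\<mu> div (2 * w))) r"
    by (subst (1) mu) (rule refl)
  also have "\<dots> = Gam u v m r" unfolding w_def by (rule ext) (rule Gam_add_lattice)
  finally have Gm: "Gam u v m r = Gam u v \<mu> r" ..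
  have pm: "m mod 2 = \<mu> mod 2" unfolding m_def by (simp add: mod_mod_cancel)
  show ?thesis
  proof (cases "m \<le> w")
    case True then show ?thesis using that m Gm pm unfolding w_def by blast
  next
    case False
    have "Gam u v (2 * w - m) r = Gam u v (m + 2 * w * (-1)) r"
      by (rule ext) (metis Gam_uminus minus_diff_eq mult_minus1_right diff_conv_add_uminus)
    also have "\<dots> = Gam u v \<mu> r" unfolding w_def Gam_add_lattice Gm[unfolded w_def] ..
    moreover have "(2 * w - m) mod 2 = \<mu> mod 2" using pm by presburger
    ultimately show ?thesis
      using that[of "2 * w - m"] m False unfolding w_def by auto
  qed
qed

lemma Gam_lower_half_in_Bk:
  assumes "ww u v > 0" "1 \<le> r" "2 * r \<le> int u - 1" "\<mu> mod 2 = (r - 1) mod 2"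
  obtains \<mu>' where "(\<mu>', r) \<in> Bk u v" "Gam u v \<mu> r = Gam u v \<mu>' r"
proof -
  obtain \<mu>' where m: "0 \<le> \<mu>'" "\<mu>' \<le> ww u v" "\<mu>' mod 2 = \<mu> mod 2" "Gam u v \<mu>' r = Gam u v \<mu> r"
    using Gam_representative_between_0_ww[OF assms(1)] by blast
  have "odd u \<or> 2 * r \<le> int u - 2" using assms(3) by presburger
  then have "(\<mu>', r) \<in> Bk u v" using m assms unfolding Bk_def by auto
  then show ?thesis using that m(4) by metis
qed

lemma Gam_multiple_of_Bk:
  assumes "u \<ge> 2" "v \<ge> 2" "u < 2 * v"
    and r: "1 \<le> r" "r \<le> int u - 1" and p: "\<mu> mod 2 = (r - 1) mod 2"
  obtains \<mu>' r' c where "(\<mu>', r') \<in> Bk u v" "Gam u v \<mu> r = (\<lambda>\<tau>. c * Gam u v \<mu>' r' \<tau>)"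
proof -
  have wd: "ww u v = 2 * int v - int u" by (simp add: ww_def)
  have w: "ww u v > 0" using assms wd by linarith
  have reflect: "Gam u v m (int u - r') = (\<lambda>\<tau>. (-1) ^ (v + 1) * Gam u v (m - ww u v) r' \<tau>)" for m r'
    using assms by (intro ext Gam_reflect) auto
  consider "2 * r \<le> int u - 1" | "2 * r = int u" | "2 * r \<ge> int u + 1" by linarith
  then show ?thesis
  proof cases
    case 1
    then obtain \<mu>' where "(\<mu>', r) \<in> Bk u v" "Gam u v \<mu> r = Gam u v \<mu>' r"
      using Gam_lower_half_in_Bk[OF w r(1) 1 p] by blast
    then show ?thesis using that[of \<mu>' r 1] by simp
  next
    case 2
    obtain \<mu>' where m: "0 \<le> \<mu>'" "\<mu>' \<le> ww u v" "\<mu>' mod 2 = \<mu> mod 2" "Gam u v \<mu>' r = Gam u v \<mu> r"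
      using Gam_representative_between_0_ww[OF w] by blast
    have eu: "even u" and ew: "even (ww u v)" using 2 wd by presburger+
    show ?thesis
    proof (cases "2 * \<mu>' \<le> ww u v")
      case True
      then have "(\<mu>', r) \<in> Bk u v" using m 2 p eu unfolding Bk_def by auto
      then show ?thesis using that[of \<mu>' r 1] m(4) by simp
    next
      case False
      have "int u - r = r" using 2 by linarith
      then have "Gam u v \<mu> r = Gam u v \<mu>' (int u - r)" using m(4) by simp
      also have "\<dots> = (\<lambda>\<tau>. (-1) ^ (v + 1) * Gam u v (\<mu>' - ww u v) r \<tau>)" by (rule reflect)
      also have "Gam u v (\<mu>' - ww u v) r = Gam u v (ww u v - \<mu>') r"
        by (rule ext) (metis Gam_uminus minus_diff_eq)
      finally have G: "Gam u v \<mu> r = (\<lambda>\<tau>. (-1) ^ (v + 1) * Gam u v (ww u v - \<mu>') r \<tau>)" .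
      have "(ww u v - \<mu>') mod 2 = (r - 1) mod 2" using m(3) p ew by presburger
      then have "(ww u v - \<mu>', r) \<in> Bk u v" using m False 2 eu unfolding Bk_def by auto
      then show ?thesis using that G by blast
    qed
  next
    case 3
    define r' where "r' = int u - r"
    have r': "1 \<le> r'" "2 * r' \<le> int u - 1" using 3 r unfolding r'_def by auto
    have p': "(\<mu> - ww u v) mod 2 = (r' - 1) mod 2" using p wd unfolding r'_def by presburger
    obtain \<mu>' where B: "(\<mu>', r') \<in> Bk u v" and E: "Gam u v (\<mu> - ww u v) r' = Gam u v \<mu>' r'"
      using Gam_lower_half_in_Bk[OF w r' p'] by blast
    have "Gam u v \<mu> r = Gam u v \<mu> (int u - r')" unfolding r'_def by simp
    also have "\<dots> = (\<lambda>\<tau>. (-1) ^ (v + 1) * Gam u v \<mu>' r' \<tau>)" unfolding reflect E ..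
    finally show ?thesis using that B by blast
  qed
qed

lemma cspan_mono: "A \<subseteq> B \<Longrightarrow> cspan A \<subseteq> cspan B"
  by (rule cspan_subset_if_multiples) (metis subsetD mult_1)

theorem mainTheorem11:
  fixes u v :: nat
  assumes "u \<ge> 2" and "v \<ge> 2" and "coprime u v" and "u < 2 * v"
  shows "cspan {Gam u v \<mu> r | \<mu> r. 1 \<le> r \<and> r \<le> int u - 1 \<and> \<mu> mod 2 = (r - 1) mod 2}
       = cspan {Gam u v \<mu> r | \<mu> r. (\<mu>, r) \<in> Bk u v}"
proof
  show "cspan {Gam u v \<mu> r | \<mu> r. 1 \<le> r \<and> r \<le> int u - 1 \<and> \<mu> mod 2 = (r - 1) mod 2}
       \<subseteq> cspan {Gam u v \<mu> r | \<mu> r. (\<mu>, r) \<in> Bk u v}"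
  proof (rule cspan_subset_if_multiples, safe)
    fix \<mu> r :: int
    assume "1 \<le> r" "r \<le> int u - 1" "\<mu> mod 2 = (r - 1) mod 2"
    then obtain \<mu>' r' c where "(\<mu>', r') \<in> Bk u v" "Gam u v \<mu> r = (\<lambda>\<tau>. c * Gam u v \<mu>' r' \<tau>)"
      using Gam_multiple_of_Bk[OF assms(1,2,4)] by blast
    then show "\<exists>g\<in>{Gam u v \<mu> r | \<mu> r. (\<mu>, r) \<in> Bk u v}. \<exists>c. Gam u v \<mu> r = (\<lambda>\<tau>. c * g \<tau>)"
      by blast
  qed
  have "(\<mu>, r) \<in> Bk u v \<Longrightarrow> 1 \<le> r \<and> r \<le> int u - 1 \<and> \<mu> mod 2 = (r - 1) mod 2" for \<mu> r
    using assms(1) unfolding Bk_def by auto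
  then show "cspan {Gam u v \<mu> r | \<mu> r. (\<mu>, r) \<in> Bk u v}
       \<subseteq> cspan {Gam u v \<mu> r | \<mu> r. 1 \<le> r \<and> r \<le> int u - 1 \<and> \<mu> mod 2 = (r - 1) mod 2}"
    by (intro cspan_mono) blast
qed

end
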